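(* Let $\mathcal A$ be a linear time-invariant algorithm with $n$ oracles, state-space realization $(A,B,C,D)$ and transfer function $\hat H(z)$ with entries $h_{ij}(z)$, $1\le i,j\le n$. (a) Suppose $D_{kk}\ne0$ for some $k\in[n]$. Then the transfer function $\hat H'(z)$ of $\mathcal C_k\mathcal A$ has entries $$h'_{ij}(z)=\begin{cases}1/h_{kk}(z)& i=k,\ j=k,\\ -h_{kj}(z)/h_{kk}(z)& i=k,\ j\ne k,\\ h_{ik}(z)/h_{kk}(z)& i\ne k,\ j=k,\\ h_{ij}(z)-h_{ik}(z)h_{kj}(z)/h_{kk}(z)& i\ne k,\ j\ne k.\end{cases}$$ (b) Suppose $D$ is invertible. Then the transfer function $\hat H'(z)$ of $\mathcal C_{[n]}\mathcal A$ satisfies $\hat H'(z)=\hat H^{-1}(z)$.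
   Context: A linear time-invariant algorithm with realization $(A,B,C,D)$ generates $x^{k+1}=Ax^k+Bu^k$, $y^k=Cx^k+Du^k$, $u^k=\phi(y^k)$, where the $n$ oracles are (sub)gradients $\partial f_i$ of convex functions; its transfer function is $\hat H(z)=C(zI-A)^{-1}B+D$. For $\kappa\subseteq[n]=\{1,\dots,n\}$, the conjugation $\mathcal C_\kappa\mathcal A$ is obtained by rewriting $\mathcal A$ to call $\partial f_i^\star=(\partial f_i)^{-1}$ ($f^\star$ the Fenchel conjugate) instead of $\partial f_i$ for each $i\in\kappa$, which swaps the oracle argument and output for those oracles; $\mathcal C_k=\mathcal C_{\{k\}}$. *)

theory Defs
  imports "HOL-Analysis.Analysis"
begin

text \<open>A state-space realization (A,B,C,D) of an LTI algorithm with state index type 's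
  and oracle index type 'i (one scalar oracle per index i).\<close>
type_synonym ('s, 'i) realization =
  "(real^'s^'s) \<times> (real^'i^'s) \<times> (real^'s^'i) \<times> (real^'i^'i)"

definition lti_traj :: "('s::finite, 'i::finite) realization \<Rightarrow>
    (nat \<Rightarrow> real^'s) \<Rightarrow> (nat \<Rightarrow> real^'i) \<Rightarrow> (nat \<Rightarrow> real^'i) \<Rightarrow> bool" where
  "lti_traj R x u y \<longleftrightarrow> (case R of (A, B, C, D) \<Rightarrow>
     (\<forall>t. x (Suc t) = A *v x t + B *v u t \<and> y t = C *v x t + D *v u t))"

text \<open>Conjugating the oracles in \<kappa> swaps oracle argument and output for those oracles:
  the new oracle output is the old argument y_i, the new oracle argument is the old output u_i.\<close>
definition conj_in :: "'i set \<Rightarrow> real^'i \<Rightarrow> real^'i \<Rightarrow> real^'i" where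
  "conj_in \<kappa> u y = (\<chi> i. if i \<in> \<kappa> then y $ i else u $ i)"

definition conj_out :: "'i set \<Rightarrow> real^'i \<Rightarrow> real^'i \<Rightarrow> real^'i" where
  "conj_out \<kappa> u y = (\<chi> i. if i \<in> \<kappa> then u $ i else y $ i)"

text \<open>R' is a realization of the conjugated algorithm C_\<kappa> A: R' generates exactly the
  iterates of R, with oracle arguments and outputs swapped for the oracles in \<kappa>.\<close>
definition is_conjugation :: "'i set \<Rightarrow> ('s::finite, 'i::finite) realization \<Rightarrow>
    ('s, 'i) realization \<Rightarrow> bool" where
  "is_conjugation \<kappa> R R' \<longleftrightarrow>
     (\<forall>x u y. lti_traj R x u y \<longleftrightarrow>
        lti_traj R' x (\<lambda>t. conj_in \<kappa> (u t) (y t)) (\<lambda>t. conj_out \<kappa> (u t) (y t)))"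

definition cmat :: "real^'n^'m \<Rightarrow> complex^'n^'m" where
  "cmat M = (\<chi> i j. complex_of_real (M $ i $ j))"

definition resolvent_ok :: "('s::finite, 'i::finite) realization \<Rightarrow> complex \<Rightarrow> bool" where
  "resolvent_ok R z \<longleftrightarrow> (case R of (A, B, C, D) \<Rightarrow> invertible (mat z - cmat A))"

definition transfer :: "('s::finite, 'i::finite) realization \<Rightarrow> complex \<Rightarrow> complex^'i^'i" where
  "transfer R z = (case R of (A, B, C, D) \<Rightarrow>
     cmat C ** matrix_inv (mat z - cmat A) ** cmat B + cmat D)"

definition Dmat :: "('s, 'i) realization \<Rightarrow> real^'i^'i" where
  "Dmat R = snd (snd (snd R))"

end

theory Submission
  imports Defs
begin

text \<open>
  Write \<open>P\<close> and \<open>Q\<close> for the coordinate projections onto \<open>\<kappa>\<close> and onto its complement, so that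
  \<open>\<C>\<^sub>\<kappa>\<A>\<close> feeds its oracles \<open>Qu + Py\<close> and reads back \<open>Pu + Qy\<close>. A realization
  \<open>(A', B', C', D')\<close> of \<open>\<C>\<^sub>\<kappa>\<A>\<close> must satisfy
  \<open>A' = A + BPC'\<close>, \<open>B' = BQ + BPD'\<close>, \<open>QC' = C + DPC'\<close> and \<open>P + QD' = DQ + DPD'\<close>
  (run it from an arbitrary state with a constant input for one step), and conversely these
  identities describe a realization as soon as \<open>DP - Q\<close> is invertible, which also allows
  solving them for \<open>C'\<close> and \<open>D'\<close>. Carried through the resolvents, the identities give
  \<open>H (Q + P H') = P + Q H'\<close> for the transfer functions. For \<open>\<kappa> = {k}\<close> this is one linear
  equation per entry of \<open>H'\<close>, solved by a pivot on \<open>h\<^sub>k\<^sub>k\<close>; for \<open>\<kappa> = [n]\<close> it reads \<open>H H' = I\<close>.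
\<close>

lemma matrix_inv_left:
  fixes M :: "'a::field^'n^'n"
  assumes "invertible M"
  shows "matrix_inv M ** M = mat 1"
  using someI_ex[OF assms[unfolded invertible_def]] unfolding matrix_inv_def by auto

lemma matrix_inv_right:
  fixes M :: "'a::field^'n^'n"
  assumes "invertible M"
  shows "M ** matrix_inv M = mat 1"
  using someI_ex[OF assms[unfolded invertible_def]] unfolding matrix_inv_def by auto

lemma matrix_inv_unique:
  fixes M N :: "'a::field^'n^'n"
  assumes "M ** N = mat 1"
  shows "matrix_inv M = N"
proof -
  have "invertible M"
    using assms invertible_right_inverse by blast
  then have "matrix_inv M = matrix_inv M ** (M ** N)"
    using assms by simp
  also have "\<dots> = N"
    by (simp add: matrix_mul_assoc matrix_inv_left \<open>invertible M\<close>)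
  finally show ?thesis .
qed

lemma invertible_matrix_vector_mult_cancel:
  fixes M :: "'a::field^'n^'n"
  assumes "invertible M"
  shows "M *v a = M *v b \<longleftrightarrow> a = b"
  by (metis assms matrix_inv_left matrix_vector_mul_assoc matrix_vector_mul_lid)

lemma matrix_add_rdistrib: "(B + C) ** A = B ** A + C ** A"
  by (vector matrix_matrix_mult_def sum.distrib[symmetric] field_simps)

lemma matrix_diff_rdistrib: "(B - C) ** (A :: 'a::ring_1^_^_) = B ** A - C ** A"
  by (vector matrix_matrix_mult_def sum_subtractf[symmetric] field_simps)

lemma matrix_vector_mult_uminus: "(- A) *v x = - (A *v (x :: 'a::ring_1^_))"
  by (simp add: vec_eq_iff matrix_vector_mult_def sum_negf)

definition coord_proj :: "'i set \<Rightarrow> 'a::semiring_1^'i^'i" where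
  "coord_proj K = (\<chi> i j. if i = j \<and> i \<in> K then 1 else 0)"

lemma coord_proj_mult_vec [simp]:
  "(coord_proj K *v v) $ i = (if i \<in> K then v $ i else 0)"
  by (simp add: coord_proj_def matrix_vector_mult_def if_distrib if_distribR sum.delta cong: if_cong)

lemma coord_proj_mult_left [simp]:
  "(coord_proj K ** M) $ i $ j = (if i \<in> K then M $ i $ j else 0)"
  by (simp add: coord_proj_def matrix_matrix_mult_def if_distrib if_distribR sum.delta cong: if_cong)

lemma coord_proj_mult_right [simp]:
  "(M ** coord_proj K) $ i $ j = (if j \<in> K then M $ i $ j else 0)"
proof -
  have "(M ** coord_proj K) $ i $ j = (\<Sum>k\<in>UNIV. if k = j then (if j \<in> K then M $ i $ j else 0) else 0)"
    unfolding matrix_matrix_mult_def coord_proj_def vec_lambda_beta by (rule sum.cong) auto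
  then show ?thesis
    by simp
qed

lemma coord_proj_empty [simp]: "coord_proj {} = 0"
  by (simp add: coord_proj_def vec_eq_iff)

lemma coord_proj_UNIV [simp]: "coord_proj UNIV = mat 1"
  by (simp add: coord_proj_def mat_def vec_eq_iff)

lemma conj_in_eq: "conj_in K u y = coord_proj (- K) *v u + coord_proj K *v y"
  by (simp add: vec_eq_iff conj_in_def)

lemma conj_out_eq: "conj_out K u y = coord_proj K *v u + coord_proj (- K) *v y"
  by (simp add: vec_eq_iff conj_out_def)

lemma conj_in_conj_out_involution:
  "conj_in K (conj_in K u y) (conj_out K u y) = u"
  "conj_out K (conj_in K u y) (conj_out K u y) = y"
  by (simp_all add: vec_eq_iff conj_in_def conj_out_def)

lemma conjugate_step_iff:
  fixes A A' :: "'a::field^'s^'s" and B B' :: "'a^'i^'s" and C C' :: "'a^'s^'i" and D D' :: "'a^'i^'i"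
    and K :: "'i set"
  defines "P \<equiv> coord_proj K" and "Q \<equiv> coord_proj (- K)"
  assumes inv: "invertible (D ** P - Q)"
    and A': "A' = A + B ** P ** C'" and B': "B' = B ** Q + B ** P ** D'"
    and C': "Q ** C' = C + D ** P ** C'" and D': "P + Q ** D' = D ** Q + D ** P ** D'"
  shows "(x1 = A *v x + B *v (Q *v v + P *v w) \<and> P *v v + Q *v w = C *v x + D *v (Q *v v + P *v w))
     \<longleftrightarrow> (x1 = A' *v x + B' *v v \<and> w = C' *v x + D' *v v)"
proof -
  have NC': "(D ** P - Q) ** C' = - C"
    using C' by (simp add: matrix_diff_rdistrib)
  have ND': "(D ** P - Q) ** D' = P - D ** Q"
    using D' by (simp add: matrix_diff_rdistrib algebra_simps)
  have "P *v v + Q *v w = C *v x + D *v (Q *v v + P *v w)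
      \<longleftrightarrow> (D ** P - Q) *v w = (D ** P - Q) *v (C' *v x + D' *v v)"
    by (auto simp: matrix_vector_mul_assoc NC' ND' matrix_vector_mult_uminus algebra_simps)
  also have "\<dots> \<longleftrightarrow> w = C' *v x + D' *v v"
    using inv by (rule invertible_matrix_vector_mult_cancel)
  finally have out: "P *v v + Q *v w = C *v x + D *v (Q *v v + P *v w) \<longleftrightarrow> w = C' *v x + D' *v v" .
  have "A *v x + B *v (Q *v v + P *v (C' *v x + D' *v v)) = A' *v x + B' *v v"
    by (simp add: A' B' matrix_vector_mul_assoc matrix_mul_assoc algebra_simps)
  with out show ?thesis
    by auto
qed

lemma is_conjugationI:
  fixes A A' :: "real^'s::finite^'s" and B B' :: "real^'i::finite^'s"
    and C C' :: "real^'s^'i" and D D' :: "real^'i^'i" and K :: "'i set"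
  defines "P \<equiv> coord_proj K" and "Q \<equiv> coord_proj (- K)"
  assumes "invertible (D ** P - Q)"
    and "A' = A + B ** P ** C'" and "B' = B ** Q + B ** P ** D'"
    and "Q ** C' = C + D ** P ** C'" and "P + Q ** D' = D ** Q + D ** P ** D'"
  shows "is_conjugation K (A, B, C, D) (A', B', C', D')"
  unfolding is_conjugation_def
proof (intro allI)
  fix x :: "nat \<Rightarrow> real^'s" and u y :: "nat \<Rightarrow> real^'i"
  define v where "v = (\<lambda>t. conj_in K (u t) (y t))"
  define w where "w = (\<lambda>t. conj_out K (u t) (y t))"
  have u: "u t = Q *v v t + P *v w t" and y: "y t = P *v v t + Q *v w t" for t
    using conj_in_conj_out_involution[of K "u t" "y t"]
    by (simp_all add: v_def w_def conj_in_eq conj_out_eq P_def Q_def)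
  have "lti_traj (A, B, C, D) x u y \<longleftrightarrow>
      (\<forall>t. x (Suc t) = A *v x t + B *v (Q *v v t + P *v w t) \<and>
           P *v v t + Q *v w t = C *v x t + D *v (Q *v v t + P *v w t))"
    by (simp add: lti_traj_def u y)
  also have "\<dots> \<longleftrightarrow> (\<forall>t. x (Suc t) = A' *v x t + B' *v v t \<and> w t = C' *v x t + D' *v v t)"
    using conjugate_step_iff[OF assms(3-7)[unfolded P_def Q_def]] by (simp add: P_def Q_def)
  also have "\<dots> \<longleftrightarrow> lti_traj (A', B', C', D') x v w"
    by (simp add: lti_traj_def)
  finally show "lti_traj (A, B, C, D) x u y \<longleftrightarrow> lti_traj (A', B', C', D') x
      (\<lambda>t. conj_in K (u t) (y t)) (\<lambda>t. conj_out K (u t) (y t))"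
    by (simp only: v_def w_def)
qed

lemma is_conjugationD:
  fixes A A' :: "real^'s::finite^'s" and B B' :: "real^'i::finite^'s"
    and C C' :: "real^'s^'i" and D D' :: "real^'i^'i" and K :: "'i set"
  defines "P \<equiv> coord_proj K" and "Q \<equiv> coord_proj (- K)"
  assumes conj: "is_conjugation K (A, B, C, D) (A', B', C', D')"
  shows "A' = A + B ** P ** C'" and "B' = B ** Q + B ** P ** D'"
    and "Q ** C' = C + D ** P ** C'" and "P + Q ** D' = D ** Q + D ** P ** D'"
proof -
  have step: "A' *v \<xi> + B' *v v = A *v \<xi> + B *v (Q *v v + P *v (C' *v \<xi> + D' *v v)) \<and>
      P *v v + Q *v (C' *v \<xi> + D' *v v) = C *v \<xi> + D *v (Q *v v + P *v (C' *v \<xi> + D' *v v))"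
    for \<xi> v
  proof -
    define x where "x = rec_nat \<xi> (\<lambda>_ x\<^sub>t. A' *v x\<^sub>t + B' *v v)"
    define w where "w t = C' *v x t + D' *v v" for t
    have "lti_traj (A', B', C', D') x (\<lambda>_. v) w"
      by (simp add: lti_traj_def x_def w_def)
    then have "lti_traj (A, B, C, D) x (\<lambda>t. conj_in K v (w t)) (\<lambda>t. conj_out K v (w t))"
      using conj[unfolded is_conjugation_def, rule_format, of x "\<lambda>t. conj_in K v (w t)" "\<lambda>t. conj_out K v (w t)"]
      by (simp add: conj_in_conj_out_involution)
    then have "x (Suc 0) = A *v x 0 + B *v conj_in K v (w 0) \<and>
        conj_out K v (w 0) = C *v x 0 + D *v conj_in K v (w 0)"
      by (simp add: lti_traj_def)
    then show ?thesis
      by (simp add: x_def w_def conj_in_eq conj_out_eq P_def Q_def)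
  qed
  have dyn: "A' *v \<xi> + B' *v v = (A + B ** P ** C') *v \<xi> + (B ** Q + B ** P ** D') *v v" for \<xi> v
    using step[of \<xi> v] by (simp add: matrix_vector_mul_assoc matrix_mul_assoc algebra_simps)
  have out: "(Q ** C') *v \<xi> + (P + Q ** D') *v v = (C + D ** P ** C') *v \<xi> + (D ** Q + D ** P ** D') *v v"
    for \<xi> v
    using step[of \<xi> v] by (simp add: matrix_vector_mul_assoc matrix_mul_assoc algebra_simps)
  show "A' = A + B ** P ** C'"
    using dyn[where v = 0] by (simp add: matrix_eq)
  show "B' = B ** Q + B ** P ** D'"
    using dyn[where \<xi> = 0] by (simp add: matrix_eq)
  show "Q ** C' = C + D ** P ** C'"
    using out[where v = 0] by (simp add: matrix_eq)
  show "P + Q ** D' = D ** Q + D ** P ** D'"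
    using out[where \<xi> = 0] by (simp add: matrix_eq)
qed

lemma conjugation_exists:
  fixes R :: "('s::finite, 'i::finite) realization"
  assumes inv: "invertible (Dmat R ** coord_proj K - coord_proj (- K))"
  shows "\<exists>R'. is_conjugation K R R'"
proof -
  obtain A B C D where R: "R = (A, B, C, D)"
    by (cases R) auto
  define P :: "real^'i^'i" where "P = coord_proj K"
  define Q :: "real^'i^'i" where "Q = coord_proj (- K)"
  define C' where "C' = matrix_inv (D ** P - Q) ** (- C)"
  define D' where "D' = matrix_inv (D ** P - Q) ** (P - D ** Q)"
  have N: "(D ** P - Q) ** matrix_inv (D ** P - Q) = mat 1"
    using inv by (simp add: matrix_inv_right P_def Q_def R Dmat_def)
  have "(D ** P - Q) ** C' = - C"
    using N by (simp add: C'_def matrix_mul_assoc)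
  then have "Q ** C' = C + D ** P ** C'"
    by (simp add: matrix_diff_rdistrib algebra_simps eq_neg_iff_add_eq_0)
  moreover have "(D ** P - Q) ** D' = P - D ** Q"
    using N by (simp add: D'_def matrix_mul_assoc)
  then have "P + Q ** D' = D ** Q + D ** P ** D'"
    by (simp add: matrix_diff_rdistrib algebra_simps)
  ultimately show ?thesis
    using inv unfolding R
    by (intro exI[of _ "(A + B ** P ** C', B ** Q + B ** P ** D', C', D')"] is_conjugationI)
      (simp_all add: P_def Q_def Dmat_def)
qed

lemma conjugate_transfer_identity:
  fixes A A' :: "'a::field^'s::finite^'s" and B B' :: "'a^'i::finite^'s" and C C' :: "'a^'s^'i"
    and D D' P Q :: "'a^'i^'i"
  assumes inv: "invertible (mat z - A)" and inv': "invertible (mat z - A')"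
    and A': "A' = A + B ** P ** C'" and B': "B' = B ** Q + B ** P ** D'"
    and C': "Q ** C' = C + D ** P ** C'" and D': "P + Q ** D' = D ** Q + D ** P ** D'"
  shows "(C ** matrix_inv (mat z - A) ** B + D) ** (Q + P ** (C' ** matrix_inv (mat z - A') ** B' + D'))
       = P + Q ** (C' ** matrix_inv (mat z - A') ** B' + D')"
proof -
  define X where "X = matrix_inv (mat z - A') ** B'"
  define G where "G = Q + P ** (C' ** X + D')"
  have "(mat z - A) ** X = (mat z - A') ** X + B ** P ** C' ** X"
    by (simp add: A' matrix_diff_rdistrib matrix_add_rdistrib algebra_simps)
  also have "\<dots> = B' + B ** P ** C' ** X"
    using inv' by (simp add: X_def matrix_mul_assoc matrix_inv_right)
  also have "\<dots> = B ** G"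
    by (simp add: B' G_def matrix_add_ldistrib matrix_mul_assoc algebra_simps)
  finally have "matrix_inv (mat z - A) ** B ** G = X"
    using inv by (metis matrix_inv_left matrix_mul_assoc matrix_mul_lid)
  then have "(C ** matrix_inv (mat z - A) ** B + D) ** G = C ** X + D ** G"
    by (simp add: matrix_add_rdistrib flip: matrix_mul_assoc)
  also have "\<dots> = (C + D ** P ** C') ** X + (D ** Q + D ** P ** D')"
    by (simp add: G_def matrix_add_ldistrib matrix_add_rdistrib matrix_mul_assoc algebra_simps)
  also have "\<dots> = P + Q ** (C' ** X + D')"
    by (simp add: C'[symmetric] D'[symmetric] matrix_add_ldistrib matrix_mul_assoc algebra_simps)
  finally show ?thesis
    by (simp add: G_def X_def matrix_mul_assoc)
qed

lemma cmat_mult: "cmat (M ** N) = cmat M ** cmat N"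
  by (simp add: cmat_def matrix_matrix_mult_def vec_eq_iff)

lemma cmat_add: "cmat (M + N) = cmat M + cmat N"
  by (simp add: cmat_def vec_eq_iff)

lemma cmat_coord_proj: "cmat (coord_proj K) = coord_proj K"
  by (simp add: cmat_def coord_proj_def vec_eq_iff)

lemma transfer_conjugation:
  fixes R R' :: "('s::finite, 'i::finite) realization"
  assumes conj: "is_conjugation K R R'" and "resolvent_ok R z" and "resolvent_ok R' z"
  shows "transfer R z ** (coord_proj (- K) + coord_proj K ** transfer R' z)
       = coord_proj K + coord_proj (- K) ** transfer R' z"
proof -
  obtain A B C D A' B' C' D' where R: "R = (A, B, C, D)" and R': "R' = (A', B', C', D')"
    by (cases R, cases R') auto
  note identities = is_conjugationD[OF conj[unfolded R R'], THEN arg_cong[where f = cmat],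
      unfolded cmat_add cmat_mult cmat_coord_proj]
  show ?thesis
    using conjugate_transfer_identity[OF _ _ identities] assms(2,3)
    unfolding R R' transfer_def resolvent_ok_def by simp
qed

lemma invertible_coord_proj_singleton:
  fixes D :: "'a::field^'i::finite^'i"
  assumes "D $ k $ k \<noteq> 0"
  shows "invertible (D ** coord_proj {k} - coord_proj (- {k}))"
  unfolding invertible_left_inverse matrix_left_invertible_ker
proof (intro allI impI)
  fix x :: "'a^'i"
  assume "(D ** coord_proj {k} - coord_proj (- {k})) *v x = 0"
  then have "D *v (coord_proj {k} *v x) = coord_proj (- {k}) *v x"
    by (simp add: matrix_vector_mult_diff_rdistrib flip: matrix_vector_mul_assoc)
  moreover have "(D *v (coord_proj {k} *v x)) $ i = D $ i $ k * x $ k" for i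
    by (simp add: matrix_vector_mult_def[of D] if_distrib if_distribR cong: if_cong)
  ultimately have "D $ i $ k * x $ k = (if i = k then 0 else x $ i)" for i
    by (metis Compl_iff coord_proj_mult_vec singleton_iff)
  then show "x = 0"
    using assms by (metis mult_eq_0_iff vec_eq_iff zero_index)
qed

lemma pivot_singleton_entries:
  fixes h h' :: "'a::field^'n::finite^'n"
  assumes "h ** (coord_proj (- {k}) + coord_proj {k} ** h') = coord_proj {k} + coord_proj (- {k}) ** h'"
  shows "h' $ i $ j =
    (if i = k \<and> j = k then 1 / h $ k $ k
     else if i = k \<and> j \<noteq> k then - h $ k $ j / h $ k $ k
     else if i \<noteq> k \<and> j = k then h $ i $ k / h $ k $ k
     else h $ i $ j - h $ i $ k * h $ k $ j / h $ k $ k)"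
proof -
  have "(h ** coord_proj {k} ** h') $ i $ j = h $ i $ k * h' $ k $ j" for i j
    by (simp add: matrix_matrix_mult_def[of "h ** coord_proj {k}"] if_distrib if_distribR cong: if_cong)
  then have entry: "(if j \<noteq> k then h $ i $ j else 0) + h $ i $ k * h' $ k $ j
      = (if i = k \<and> j = k then 1 else 0) + (if i \<noteq> k then h' $ i $ j else 0)" for i j
    using arg_cong[OF assms, of "\<lambda>M. M $ i $ j"]
    by (simp add: matrix_add_ldistrib matrix_mul_assoc) (auto simp: coord_proj_def)
  have inv: "h $ k $ k * h' $ k $ k = 1"
    using entry[where i = k and j = k] by simp
  then have nz: "h $ k $ k \<noteq> 0"
    by auto
  with inv have kk: "h' $ k $ k = 1 / h $ k $ k"
    by (simp add: eq_divide_eq mult.commute)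
  have row: "h' $ k $ j = - h $ k $ j / h $ k $ k" if "j \<noteq> k" for j
    using entry[where i = k and j = j] that nz by (simp add: field_simps eq_neg_iff_add_eq_0)
  have col: "h' $ i $ k = h $ i $ k / h $ k $ k" if "i \<noteq> k" for i
    using entry[where i = i and j = k] that kk by simp
  have "h' $ i $ j = h $ i $ j - h $ i $ k * h $ k $ j / h $ k $ k" if "i \<noteq> k" "j \<noteq> k"
    using entry[where i = i and j = j] that row[of j] by simp
  then show ?thesis
    using kk row col by simp
qed

theorem corollary8p2:
  fixes R :: "('s::finite, 'i::finite) realization"
  shows
   "(\<forall>k. Dmat R $ k $ k \<noteq> 0 \<longrightarrow>
       (\<exists>R'. is_conjugation {k} R R') \<and>
       (\<forall>R' z. is_conjugation {k} R R' \<longrightarrow> resolvent_ok R z \<longrightarrow> resolvent_ok R' z \<longrightarrow>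
          (\<forall>i j. transfer R' z $ i $ j =
             (let h = transfer R z in
              if i = k \<and> j = k then 1 / h $ k $ k
              else if i = k \<and> j \<noteq> k then - h $ k $ j / h $ k $ k
              else if i \<noteq> k \<and> j = k then h $ i $ k / h $ k $ k
              else h $ i $ j - h $ i $ k * h $ k $ j / h $ k $ k)))) \<and>
    (invertible (Dmat R) \<longrightarrow>
       (\<exists>R'. is_conjugation UNIV R R') \<and>
       (\<forall>R' z. is_conjugation UNIV R R' \<longrightarrow> resolvent_ok R z \<longrightarrow> resolvent_ok R' z \<longrightarrow>
          transfer R' z = matrix_inv (transfer R z)))"
proof (intro conjI allI impI)
  fix k
  assume "Dmat R $ k $ k \<noteq> 0"
  then show "\<exists>R'. is_conjugation {k} R R'"
    by (intro conjugation_exists invertible_coord_proj_singleton)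
  fix R' z i j
  assume "is_conjugation {k} R R'" "resolvent_ok R z" "resolvent_ok R' z"
  then show "transfer R' z $ i $ j = (let h = transfer R z in
      if i = k \<and> j = k then 1 / h $ k $ k
      else if i = k \<and> j \<noteq> k then - h $ k $ j / h $ k $ k
      else if i \<noteq> k \<and> j = k then h $ i $ k / h $ k $ k
      else h $ i $ j - h $ i $ k * h $ k $ j / h $ k $ k)"
    unfolding Let_def by (intro pivot_singleton_entries transfer_conjugation)
next
  assume "invertible (Dmat R)"
  then show "\<exists>R'. is_conjugation UNIV R R'"
    by (intro conjugation_exists) simp
  fix R' z
  assume "is_conjugation UNIV R R'" "resolvent_ok R z" "resolvent_ok R' z"
  then have "transfer R z ** transfer R' z = mat 1"
    using transfer_conjugation[of UNIV R R' z] by simp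
  then show "transfer R' z = matrix_inv (transfer R z)"
    by (simp add: matrix_inv_unique)
qed

end
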